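(* Let $(\mathcal T_0,\mathfrak c)$ be an $(N{+}1)$-colored initial triangulation in $\mathbb R^n$ and let $T\in\mathbb T$. Then every edge $e\in\mathcal E(T)$ with $e\ne\mathrm{bse}(T)$ satisfies $g^\sharp(e)>g^\sharp(\mathrm{bse}(T))$. More generally, for every $m$-subsimplex $S\subset T$ with $m\ge1$ and every edge $e$ of $S$ with $e\ne\mathrm{bse}(S)$, $g^\sharp(e)>g^\sharp(\mathrm{bse}(S))$.
   Context: $n\ge2$, $N\ge n$. An $(N{+}1)$-colored triangulation is a conforming triangulation $\mathcal T_0$ of a polyhedral domain in $\mathbb R^n$ with $\mathfrak c:\mathcal V(\mathcal T_0)\to\{0,\dots,N\}$ giving distinct colors to the vertices of each simplex. Each vertex $v$ has an integer generation $g(v)$, with level $\ell(v)\in\mathbb Z$ and type $t(v)\in\{1,\dots,N\}$ defined by $g(v)=N(\ell(v)-1)+t(v)$; initial vertices have $g(v)=-\mathfrak c(v)$. For an $m$-simplex $S=[v_0,\dots,v_m]$ ($1\le m\le n$) with $g(v_0)>\dots>g(v_m)$: if $\ell(v_m)\ne\ell(v_{m-1})$ then $\mathrm{bse}(S)=[v_{m-1},v_m]$ and the midpoint $\mathrm{bsv}(S)$ has generation $g(v_{m-1})+N$; otherwise, with $j=\min\{k:\ell(v_k)=\ell(v_m)\}$, $\mathrm{bse}(S)=[v_j,v_m]$ and $g(\mathrm{bsv}(S))=g(v_m)+2N+1-t(v_j)$. Define $g^\sharp(S)=g(\mathrm{bsv}(S))$ (in particular for edges, $m=1$). Bisecting an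 $n$-simplex replaces one endpoint of its bisection edge by the midpoint, producing two children. $\mathrm{Refine}(\mathcal T,T)$: with $e=\mathrm{bse}(T)$ and $\omega(e)$ the simplices containing edge $e$, if some $T'\in\omega(e)$ has $\mathrm{bse}(T')\ne e$ return $\mathrm{Refine}(\mathrm{Refine}(\mathcal T,T'),T)$, else bisect all of $\omega(e)$. $\mathbb T$ is the set of all simplices in triangulations obtained from $\mathcal T_0$ by finitely many refinements. $\mathcal E(T)$ is the edge set of $T$. *)

theory Defs
  imports "HOL-Analysis.Analysis"
begin

text \<open>Level and type of a generation k:  k = N (lev - 1) + typ  with  typ in 1..N.\<close>
definition lev :: "nat \<Rightarrow> int \<Rightarrow> int" where
  "lev N k = (k - 1) div int N + 1"

definition vtype :: "nat \<Rightarrow> int \<Rightarrow> int" where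
  "vtype N k = (k - 1) mod int N + 1"

definition gen_order :: "('a \<Rightarrow> int) \<Rightarrow> 'a set \<Rightarrow> 'a list" where
  "gen_order g S = (SOME vs. set vs = S \<and> distinct vs \<and> sorted_wrt (\<lambda>x y. g y < g x) vs)"

definition bse :: "nat \<Rightarrow> ('a \<Rightarrow> int) \<Rightarrow> 'a set \<Rightarrow> 'a set" where
  "bse N g S = (let vs = gen_order g S; m = length vs - 1 in
     if lev N (g (vs ! m)) \<noteq> lev N (g (vs ! (m - 1))) then {vs ! (m - 1), vs ! m}
     else {vs ! (LEAST k. lev N (g (vs ! k)) = lev N (g (vs ! m))), vs ! m})"

text \<open>g-sharp(S): the generation of the bisection vertex bsv(S).\<close>
definition gsharp :: "nat \<Rightarrow> ('a \<Rightarrow> int) \<Rightarrow> 'a set \<Rightarrow> int" where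
  "gsharp N g S = (let vs = gen_order g S; m = length vs - 1 in
     if lev N (g (vs ! m)) \<noteq> lev N (g (vs ! (m - 1))) then g (vs ! (m - 1)) + int N
     else g (vs ! m) + 2 * int N + 1
            - vtype N (g (vs ! (LEAST k. lev N (g (vs ! k)) = lev N (g (vs ! m))))))"

text \<open>Conforming triangulation of a polyhedral domain in R^n (n = DIM('a)); simplices are
  represented by their vertex sets.\<close>
definition conforming_triangulation :: "'a::euclidean_space set set \<Rightarrow> bool" where
  "conforming_triangulation \<T> \<longleftrightarrow>
     finite \<T> \<and> \<T> \<noteq> {} \<and>
     (\<forall>T\<in>\<T>. finite T \<and> card T = DIM('a) + 1 \<and> \<not> affine_dependent T) \<and>
     (\<forall>T1\<in>\<T>. \<forall>T2\<in>\<T>. convex hull T1 \<inter> convex hull T2 = convex hull (T1 \<inter> T2)) \<and>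
     (\<exists>\<Omega>. open \<Omega> \<and> connected \<Omega> \<and> bounded \<Omega> \<and>
          closure \<Omega> = \<Union>((\<lambda>T. convex hull T) ` \<T>))"

definition colored_triangulation ::
    "nat \<Rightarrow> 'a::euclidean_space set set \<Rightarrow> ('a \<Rightarrow> nat) \<Rightarrow> bool" where
  "colored_triangulation N \<T> c \<longleftrightarrow>
     conforming_triangulation \<T> \<and> (\<forall>v\<in>\<Union>\<T>. c v \<le> N) \<and> (\<forall>T\<in>\<T>. inj_on c T)"

definition patch :: "'a set set \<Rightarrow> 'a set \<Rightarrow> 'a set set" where
  "patch \<T> e = {T \<in> \<T>. e \<subseteq> T}"

definition bisect_all :: "'a::real_vector set set \<Rightarrow> 'a \<Rightarrow> 'a \<Rightarrow> 'a set set" where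
  "bisect_all \<T> a b = (\<T> - patch \<T> {a, b}) \<union>
     (\<Union>T\<in>patch \<T> {a, b}. {insert (midpoint a b) (T - {a}), insert (midpoint a b) (T - {b})})"

text \<open>A state is a triangulation together with the generation function on points.
  refines N s T s' means: the recursive call Refine(s, T) terminates with result s'.\<close>
inductive refines :: "nat \<Rightarrow> 'a::real_vector set set \<times> ('a \<Rightarrow> int) \<Rightarrow> 'a set
                        \<Rightarrow> 'a set set \<times> ('a \<Rightarrow> int) \<Rightarrow> bool" for N where
  bisect: "\<lbrakk> T \<in> \<T>; bse N g T = {a, b}; a \<noteq> b;
            \<forall>T'\<in>patch \<T> (bse N g T). bse N g T' = bse N g T \<rbrakk>
           \<Longrightarrow> refines N (\<T>, g) T (bisect_all \<T> a b, g(midpoint a b := gsharp N g T))"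
| recurse: "\<lbrakk> T \<in> \<T>; T' \<in> patch \<T> (bse N g T); bse N g T' \<noteq> bse N g T;
             refines N (\<T>, g) T' s1; refines N s1 T s2 \<rbrakk>
           \<Longrightarrow> refines N (\<T>, g) T s2"

inductive reachable :: "nat \<Rightarrow> 'a::real_vector set set \<Rightarrow> ('a \<Rightarrow> nat)
                          \<Rightarrow> 'a set set \<times> ('a \<Rightarrow> int) \<Rightarrow> bool" for N \<T>0 c where
  init: "reachable N \<T>0 c (\<T>0, \<lambda>v. - int (c v))"
| step: "\<lbrakk> reachable N \<T>0 c (\<T>, g); T \<in> \<T>; refines N (\<T>, g) T s \<rbrakk>
         \<Longrightarrow> reachable N \<T>0 c s"

end

theory Submission
  imports Defs
begin

text \<open>
  Comparing g-sharp values is purely combinatorial: if the vertices of a simplex \<open>S\<close> have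
  pairwise distinct generations, list them by decreasing generation; levels then decrease weakly
  along the list, and a case analysis on the levels of the two endpoints shows that every edge
  other than \<open>bse(S)\<close> has strictly larger g-sharp. So it suffices that the vertices of each
  simplex created by refinement carry distinct generations.

  This is kept invariant together with \<open>g(v) < g-sharp(T)\<close> for all vertices \<open>v\<close> of \<open>T\<close>.
  A bisection gives the midpoint the generation g-sharp(T), above all old ones, and the
  g-sharp of a child is attained either at an edge through the new vertex or at an edge of
  \<open>T\<close> other than \<open>bse(T)\<close>, so it exceeds g-sharp(T). The geometry enters only to know
  that the midpoint is a new point, not a vertex of another simplex: affine independence and
  the conformity condition \<open>hull T \<inter> hull T' \<subseteq> hull (T \<inter> T')\<close> survive bisection, which is
  checked in barycentric coordinates.
\<close>

section \<open>Levels, types and the bisection edge\<close>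

lemma lev_vtype_decomposition: "0 < N \<Longrightarrow> k = int N * (lev N k - 1) + vtype N k"
  unfolding lev_def vtype_def by simp

lemma vtype_bounds: "0 < N \<Longrightarrow> 1 \<le> vtype N k \<and> vtype N k \<le> int N"
  unfolding vtype_def by (simp add: pos_mod_bound pos_mod_sign add1_zle_eq)

lemma lev_mono: "p \<le> q \<Longrightarrow> 0 < N \<Longrightarrow> lev N p \<le> lev N q"
  unfolding lev_def by (simp add: zdiv_mono1)

lemma diff_eq_vtype_diff: "0 < N \<Longrightarrow> lev N p = lev N q \<Longrightarrow> q - p = vtype N q - vtype N p"
  using lev_vtype_decomposition[of N p] lev_vtype_decomposition[of N q] by (smt (verit))

lemma lev_less_imp_le:
  assumes "0 < N" "lev N p < lev N q"
  shows "p + int N + 1 - vtype N p \<le> q"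
proof -
  have "int N * lev N p \<le> int N * (lev N q - 1)"
    using assms by (intro mult_left_mono) auto
  then show ?thesis using lev_vtype_decomposition[of N p] lev_vtype_decomposition[of N q] vtype_bounds[of N q] assms
    by (simp add: algebra_simps)
qed

definition gsharp_edge :: "nat \<Rightarrow> int \<Rightarrow> int \<Rightarrow> int" where
  "gsharp_edge N p q = (if lev N q \<noteq> lev N p then p + int N else q + 2 * int N + 1 - vtype N p)"

lemma gsharp_edge_greater: "0 < N \<Longrightarrow> q < p \<Longrightarrow> p < gsharp_edge N p q"
  using diff_eq_vtype_diff[of N q p] vtype_bounds[of N p] vtype_bounds[of N q]
  unfolding gsharp_edge_def by auto

lemma gsharp_edge_pos: "0 < N \<Longrightarrow> - int N \<le> q \<Longrightarrow> q < p \<Longrightarrow> 0 < gsharp_edge N p q"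
  using vtype_bounds[of N p] unfolding gsharp_edge_def by auto

definition bse_index :: "nat \<Rightarrow> (nat \<Rightarrow> int) \<Rightarrow> nat \<Rightarrow> nat" where
  "bse_index N G m = (if lev N (G m) \<noteq> lev N (G (m - 1)) then m - 1
     else LEAST k. lev N (G k) = lev N (G m))"

lemma bse_index_less:
  assumes "1 \<le> m"
  shows "bse_index N G m < m"
proof (cases "lev N (G m) = lev N (G (m - 1))")
  case True
  then have "(LEAST k. lev N (G k) = lev N (G m)) \<le> m - 1" by (intro Least_le) simp
  then show ?thesis using assms True unfolding bse_index_def by simp
qed (use assms in \<open>simp add: bse_index_def\<close>)

lemma Least_cong_below:
  assumes "P m" "\<And>k. k \<le> m \<Longrightarrow> P k = Q k"
  shows "(LEAST k::nat. P k) = (LEAST k. Q k)"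
proof (rule Least_equality)
  have "Q m" using assms by simp
  then have "(LEAST k. Q k) \<le> m" "Q (LEAST k. Q k)" by (auto intro: Least_le LeastI)
  then show "P (LEAST k. Q k)" using assms(2) by simp
  show "(LEAST k. Q k) \<le> k" if "P k" for k
    using \<open>(LEAST k. Q k) \<le> m\<close> assms(2)[of k] that by (cases "k \<le> m") (auto intro: Least_le)
qed

lemma bse_index_cong: "(\<And>k. k \<le> m \<Longrightarrow> G' k = G k) \<Longrightarrow> bse_index N G' m = bse_index N G m"
  unfolding bse_index_def by (auto intro!: Least_cong_below[where m = m])

context
  fixes N m :: nat and G :: "nat \<Rightarrow> int"
  assumes N: "0 < N" and m: "1 \<le> m"
    and decreasing: "\<And>i j. i < j \<Longrightarrow> j \<le> m \<Longrightarrow> G j < G i"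
begin

private lemma decreasing_le: "i \<le> j \<Longrightarrow> j \<le> m \<Longrightarrow> G j \<le> G i"
  using decreasing by (cases "i = j") (auto intro: less_imp_le)

private lemma lev_antimono: "i \<le> j \<Longrightarrow> j \<le> m \<Longrightarrow> lev N (G j) \<le> lev N (G i)"
  using lev_mono[OF decreasing_le N] .

lemma gsharp_edge_bse_index_less_last_levels_differ:
  assumes A: "lev N (G m) \<noteq> lev N (G (m - 1))"
    and ij: "i < j" "j \<le> m" "(i, j) \<noteq> (m - 1, m)"
  shows "G (m - 1) + int N < gsharp_edge N (G i) (G j)"
proof (cases "lev N (G j) = lev N (G i)")
  case True
  have "j \<noteq> m"
  proof
    assume "j = m"
    then have "lev N (G (m - 1)) \<le> lev N (G m)"
      using True lev_antimono[of i "m - 1"] ij by simp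
    then show False using A lev_antimono[of "m - 1" m] by simp
  qed
  then have "G (m - 1) \<le> G j" using decreasing_le ij by auto
  then show ?thesis using True vtype_bounds[OF N, of "G i"] unfolding gsharp_edge_def by simp
next
  case False
  then have "G (m - 1) < G i" using decreasing[of i "m - 1"] ij m by auto
  then show ?thesis using False unfolding gsharp_edge_def by simp
qed

lemma gsharp_edge_last_level_block:
  assumes j0: "lev N (G j0) = lev N (G m)" "j0 \<le> i"
    and ij: "i < j" "j \<le> m" "(i, j) \<noteq> (j0, m)" and lev_i: "lev N (G i) = lev N (G m)"
  shows "G m + 2 * int N + 1 - vtype N (G j0) < gsharp_edge N (G i) (G j)"
proof -
  have "lev N (G j) = lev N (G i)" using lev_antimono[of i j] lev_antimono[of j m] ij lev_i by simp
  moreover have "G i - G j0 = vtype N (G i) - vtype N (G j0)"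
    using diff_eq_vtype_diff[OF N, of "G j0" "G i"] j0(1) lev_i by simp
  moreover have "G i \<le> G j0" "G m \<le> G j" using decreasing_le j0(2) ij by auto
  moreover have "G i < G j0 \<or> G m < G j"
    using decreasing[of j0 i] decreasing[of j m] j0(2) ij by (cases "i = j0") auto
  ultimately show ?thesis unfolding gsharp_edge_def by auto
qed

lemma gsharp_edge_bse_index_less_last_levels_agree:
  assumes B: "lev N (G m) = lev N (G (m - 1))"
    and j0: "j0 = (LEAST k. lev N (G k) = lev N (G m))"
    and ij: "i < j" "j \<le> m" "(i, j) \<noteq> (j0, m)"
  shows "G m + 2 * int N + 1 - vtype N (G j0) < gsharp_edge N (G i) (G j)"
proof -
  have "j0 \<le> m - 1" using B unfolding j0 by (intro Least_le) simp
  then have j0_less: "j0 < m" using m by simp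
  have lev_j0: "lev N (G j0) = lev N (G m)" unfolding j0 by (rule LeastI[of _ m]) simp
  have vtype_j0: "vtype N (G m) < vtype N (G j0)"
    using diff_eq_vtype_diff[OF N lev_j0] decreasing[OF j0_less] by simp
  show ?thesis
  proof (cases "lev N (G i) = lev N (G m)")
    case True
    have "j0 \<le> i" unfolding j0 using True by (intro Least_le) simp
    then show ?thesis using gsharp_edge_last_level_block[OF lev_j0 _ ij True] by simp
  next
    case False
    then have lev_i: "lev N (G m) < lev N (G i)" using lev_antimono[of i m] ij by simp
    show ?thesis
    proof (cases "lev N (G j) = lev N (G i)")
      case True
      then have "lev N (G m) < lev N (G j)" using lev_i by simp
      then have "G m + int N + 1 - vtype N (G m) \<le> G j" by (rule lev_less_imp_le[OF N])
      then show ?thesis using True vtype_bounds[OF N, of "G i"] vtype_j0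
        unfolding gsharp_edge_def by auto
    next
      case False
      have "G m + int N + 1 - vtype N (G m) \<le> G i" using lev_i by (rule lev_less_imp_le[OF N])
      then show ?thesis using False vtype_j0 unfolding gsharp_edge_def by auto
    qed
  qed
qed

lemma gsharp_edge_bse_index_less:
  assumes "i < j" "j \<le> m" "(i, j) \<noteq> (bse_index N G m, m)"
  shows "gsharp_edge N (G (bse_index N G m)) (G m) < gsharp_edge N (G i) (G j)"
proof (cases "lev N (G m) = lev N (G (m - 1))")
  case True
  let ?j0 = "LEAST k. lev N (G k) = lev N (G m)"
  have "lev N (G ?j0) = lev N (G m)" by (rule LeastI[of _ m]) simp
  then show ?thesis
    using gsharp_edge_bse_index_less_last_levels_agree[OF True refl] assms True
    unfolding bse_index_def gsharp_edge_def by auto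
next
  case False
  then show ?thesis
    using gsharp_edge_bse_index_less_last_levels_differ assms
    unfolding bse_index_def gsharp_edge_def by auto
qed

end

lemma gen_order:
  fixes g :: "'a \<Rightarrow> int"
  assumes "finite S" "inj_on g S"
  shows "set (gen_order g S) = S" "distinct (gen_order g S)"
    "sorted_wrt (\<lambda>x y. g y < g x) (gen_order g S)"
proof -
  let ?h = "the_inv_into S g"
  let ?ks = "rev (sorted_list_of_set (g ` S))"
  have "sorted_wrt (\<lambda>x y. y < x) ?ks"
    using strict_sorted_list_of_set[of "g ` S"] by (simp add: sorted_wrt_rev)
  moreover have "g (?h k) = k" if "k \<in> g ` S" for k
    using assms(2) that by (simp add: f_the_inv_into_f)
  ultimately have "sorted_wrt (\<lambda>x y. g y < g x) (map ?h ?ks)"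
    using assms(1) unfolding sorted_wrt_map by (auto elim: sorted_wrt_mono_rel[rotated])
  moreover have "set (map ?h ?ks) = S" "distinct (map ?h ?ks)"
    using assms inj_on_the_inv_into by (auto simp: the_inv_into_onto distinct_map)
  ultimately have "\<exists>vs. set vs = S \<and> distinct vs \<and> sorted_wrt (\<lambda>x y. g y < g x) vs" by blast
  from someI_ex[OF this] show "set (gen_order g S) = S" "distinct (gen_order g S)"
    "sorted_wrt (\<lambda>x y. g y < g x) (gen_order g S)"
    unfolding gen_order_def by blast+
qed

lemma gen_order_cong:
  assumes "\<And>x. x \<in> S \<Longrightarrow> g' x = g x"
  shows "gen_order g' S = gen_order g S"
proof -
  have "sorted_wrt (\<lambda>x y. g' y < g' x) vs = sorted_wrt (\<lambda>x y. g y < g x) vs" if "set vs = S" for vs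
    using sorted_wrt_mono_rel[of vs "\<lambda>x y. g' y < g' x" "\<lambda>x y. g y < g x"]
      sorted_wrt_mono_rel[of vs "\<lambda>x y. g y < g x" "\<lambda>x y. g' y < g' x"] assms that by auto
  then have "(\<lambda>vs. set vs = S \<and> distinct vs \<and> sorted_wrt (\<lambda>x y. g' y < g' x) vs)
      = (\<lambda>vs. set vs = S \<and> distinct vs \<and> sorted_wrt (\<lambda>x y. g y < g x) vs)"
    by (intro ext) blast
  then show ?thesis unfolding gen_order_def by simp
qed

lemma gen_order_nth:
  fixes g :: "'a \<Rightarrow> int"
  assumes "finite S" "inj_on g S"
  defines "vs \<equiv> gen_order g S"
  shows "length vs = card S" "\<And>i j. i < j \<Longrightarrow> j < card S \<Longrightarrow> g (vs ! j) < g (vs ! i)"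
    "\<And>k. k < card S \<Longrightarrow> vs ! k \<in> S" "\<And>x. x \<in> S \<Longrightarrow> \<exists>k < card S. vs ! k = x"
  using gen_order[OF assms(1,2), folded vs_def] distinct_card[of vs]
  by (auto simp: sorted_wrt_iff_nth_less in_set_conv_nth)

lemma gen_order_edge:
  fixes g :: "'a \<Rightarrow> int"
  assumes "g y < g x"
  shows "gen_order g {x, y} = [x, y]"
proof -
  have "finite {x, y}" "inj_on g {x, y}" using assms by (auto simp: inj_on_def)
  note vs = gen_order[OF this]
  have "length (gen_order g {x, y}) = card {x, y}" using vs distinct_card by metis
  also have "\<dots> = 2" using assms by (cases "x = y") auto
  finally have "length (gen_order g {x, y}) = 2" .
  then obtain u w where uw: "gen_order g {x, y} = [u, w]"
    by (auto simp: length_Suc_conv numeral_2_eq_2)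
  then have "{u, w} = {x, y}" "g w < g u" using vs by auto
  then show ?thesis using uw assms by (metis doubleton_eq_iff less_asym)
qed

lemma bse_gsharp_edge:
  fixes g :: "'a \<Rightarrow> int"
  assumes "g y < g x"
  shows "bse N g {x, y} = {x, y}" "gsharp N g {x, y} = gsharp_edge N (g x) (g y)"
  using Least_eq_0[of "\<lambda>k. lev N (g ([x, y] ! k)) = lev N (g y)"]
  unfolding bse_def gsharp_def gsharp_edge_def Let_def gen_order_edge[of g y x, OF assms] by auto

lemma bse_gsharp_by_index:
  fixes g :: "'a \<Rightarrow> int" and N :: nat
  assumes "finite S" "inj_on g S" "2 \<le> card S"
  defines "vs \<equiv> gen_order g S" and "m \<equiv> card S - 1"
  defines "i \<equiv> bse_index N (\<lambda>k. g (vs ! k)) m"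
  shows "bse N g S = {vs ! i, vs ! m}" "gsharp N g S = gsharp_edge N (g (vs ! i)) (g (vs ! m))"
proof -
  have len: "length vs - 1 = m" using gen_order_nth(1)[OF assms(1,2)] unfolding vs_def m_def by simp
  let ?j0 = "LEAST k. lev N (g (vs ! k)) = lev N (g (vs ! m))"
  have "lev N (g (vs ! ?j0)) = lev N (g (vs ! m))" by (rule LeastI[of _ m]) simp
  then show "bse N g S = {vs ! i, vs ! m}" "gsharp N g S = gsharp_edge N (g (vs ! i)) (g (vs ! m))"
    unfolding bse_def gsharp_def Let_def vs_def[symmetric] len i_def bse_index_def gsharp_edge_def
    by auto
qed

lemma gsharp_as_edge:
  fixes g :: "'a \<Rightarrow> int"
  assumes "finite S" "inj_on g S" "2 \<le> card S"
  obtains x y where "x \<in> S" "y \<in> S" "g y < g x" "bse N g S = {x, y}"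
    "gsharp N g S = gsharp_edge N (g x) (g y)"
proof -
  define vs where "vs = gen_order g S"
  define m where "m = card S - 1"
  define i where "i = bse_index N (\<lambda>k. g (vs ! k)) m"
  note vs = gen_order_nth[OF assms(1,2), folded vs_def]
  have "i < m" unfolding i_def using assms(3) m_def by (intro bse_index_less) simp
  then have "vs ! i \<in> S" "vs ! m \<in> S" "g (vs ! m) < g (vs ! i)"
    using vs assms(3) m_def by auto
  moreover have "bse N g S = {vs ! i, vs ! m}" "gsharp N g S = gsharp_edge N (g (vs ! i)) (g (vs ! m))"
    unfolding vs_def m_def i_def by (rule bse_gsharp_by_index[OF assms(1-3)])+
  ultimately show ?thesis by (rule that)
qed

lemma bse_subset_card:
  fixes g :: "'a \<Rightarrow> int"
  assumes "finite S" "inj_on g S" "2 \<le> card S"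
  shows "bse N g S \<subseteq> S" "card (bse N g S) = 2" "gsharp N g (bse N g S) = gsharp N g S"
proof -
  obtain x y where xy: "x \<in> S" "y \<in> S" "g y < g x" "bse N g S = {x, y}"
    "gsharp N g S = gsharp_edge N (g x) (g y)"
    by (rule gsharp_as_edge[OF assms])
  then have "x \<noteq> y" by auto
  then show "bse N g S \<subseteq> S" "card (bse N g S) = 2" "gsharp N g (bse N g S) = gsharp N g S"
    using xy bse_gsharp_edge(2)[of g y x] by simp_all
qed

lemma bse_gsharp_cong:
  fixes g :: "'a \<Rightarrow> int"
  assumes "finite S" "inj_on g S" "2 \<le> card S" "\<And>x. x \<in> S \<Longrightarrow> g' x = g x"
  shows "bse N g' S = bse N g S" "gsharp N g' S = gsharp N g S"
proof -
  have inj': "inj_on g' S" using assms(2,4) inj_on_cong by blast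
  have vs: "gen_order g' S = gen_order g S" by (rule gen_order_cong[OF assms(4)])
  define m where "m = card S - 1"
  have eq: "g' (gen_order g S ! k) = g (gen_order g S ! k)" if "k \<le> m" for k
    using that assms gen_order_nth(3)[OF assms(1,2), of k] m_def by simp
  define i where "i = bse_index N (\<lambda>k. g (gen_order g S ! k)) m"
  have "bse_index N (\<lambda>k. g' (gen_order g S ! k)) m = i"
    unfolding i_def by (rule bse_index_cong) (rule eq)
  moreover have "i \<le> m" unfolding i_def
    by (rule less_imp_le, rule bse_index_less) (use assms(3) m_def in simp)
  ultimately show "bse N g' S = bse N g S" "gsharp N g' S = gsharp N g S"
    using bse_gsharp_by_index[OF assms(1-3), of N] bse_gsharp_by_index[OF assms(1) inj' assms(3), of N]
      eq[of i] eq[of m]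
    unfolding vs m_def[symmetric] i_def[symmetric] by simp_all
qed

theorem gsharp_bse_less:
  fixes g :: "'a \<Rightarrow> int"
  assumes "finite S" "inj_on g S" "2 \<le> card S" "0 < N"
    and "e \<subseteq> S" "card e = 2" "e \<noteq> bse N g S"
  shows "gsharp N g (bse N g S) < gsharp N g e"
proof -
  define vs where "vs = gen_order g S"
  define m where "m = card S - 1"
  define G where "G k = g (vs ! k)" for k
  note vs = gen_order_nth[OF assms(1,2), folded vs_def]
  have m: "1 \<le> m" using assms(3) m_def by simp
  have decreasing: "G j < G i" if "i < j" "j \<le> m" for i j
    using vs(2) that assms(3) unfolding G_def m_def by simp
  obtain a b where ab: "e = {a, b}" "a \<noteq> b" using assms(6) by (meson card_2_iff)
  then have "g a \<noteq> g b" using assms(2,5) by (auto simp: inj_on_def)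
  then obtain x y where e: "e = {x, y}" "g y < g x"
    using ab(1) by (metis insert_commute linorder_neq_iff)
  have "x \<in> S" "y \<in> S" using e(1) assms(5) by auto
  then obtain i j where "i < card S" "vs ! i = x" "j < card S" "vs ! j = y" using vs(4) by meson
  then have i: "i \<le> m" "vs ! i = x" and j: "j \<le> m" "vs ! j = y" unfolding m_def by auto
  have "\<not> j \<le> i" using decreasing[of j i] i j e(2) unfolding G_def by (cases "j = i") auto
  then have ij: "i < j" "j \<le> m" "e = {vs ! i, vs ! j}" using i j e(1) by auto
  have bse: "bse N g S = {vs ! bse_index N G m, vs ! m}"
    and gs: "gsharp N g S = gsharp_edge N (G (bse_index N G m)) (G m)"
    unfolding vs_def m_def G_def by (rule bse_gsharp_by_index[OF assms(1-3)])+
  have "(i, j) \<noteq> (bse_index N G m, m)" using assms(7) bse ij(3) by auto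
  then have "gsharp_edge N (G (bse_index N G m)) (G m) < gsharp_edge N (G i) (G j)"
    using gsharp_edge_bse_index_less[where N = N and m = m and G = G] assms(4) m decreasing ij
    by blast
  moreover have "gsharp N g e = gsharp_edge N (G i) (G j)"
    using bse_gsharp_edge(2)[of g "vs ! j" "vs ! i"] decreasing[OF ij(1,2)] ij(3)
    unfolding G_def by simp
  ultimately show ?thesis using bse_subset_card(3)[OF assms(1-3)] gs by simp
qed

lemma child_generations:
  fixes g :: "'a \<Rightarrow> int"
  assumes N: "0 < N" and T: "finite T" "inj_on g T" "2 \<le> card T"
    and below: "\<forall>v\<in>T. g v < gsharp N g T" and a: "a \<in> bse N g T" and p: "p \<notin> T"
  defines "g' \<equiv> g(p := gsharp N g T)" and "C \<equiv> insert p (T - {a})"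
  shows "inj_on g' C" "\<forall>v\<in>C. g' v < gsharp N g' C"
proof -
  let ?s = "gsharp N g T"
  have "a \<in> T" using a bse_subset_card[OF T] by blast
  have g'_T: "g' v = g v" if "v \<in> T" for v using that p unfolding g'_def by auto
  have g'_p: "g' p = ?s" unfolding g'_def by simp
  have "inj_on g' (T - {a})" using T(2) g'_T by (auto simp: inj_on_def)
  moreover have "g' p \<notin> g' ` (T - {a})" using g'_T g'_p below by fastforce
  ultimately show inj: "inj_on g' C" unfolding C_def using p by simp
  have le: "g' v \<le> ?s" if "v \<in> C" for v using that g'_T g'_p below unfolding C_def by fastforce
  have "finite C" "card C = card T"
    using T(1) p \<open>a \<in> T\<close> card_gt_0_iff[of T] unfolding C_def by (auto simp: card.insert_remove)
  then obtain x y where xy: "x \<in> C" "y \<in> C" "g' y < g' x" "bse N g' C = {x, y}"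
    "gsharp N g' C = gsharp_edge N (g' x) (g' y)"
    using gsharp_as_edge[of C g'] inj T(3) by metis
  have "?s < gsharp N g' C"
  proof (cases "x = p")
    case True
    then show ?thesis using xy(3,5) g'_p gsharp_edge_greater[OF N] by simp
  next
    case False
    have "y \<noteq> p" using xy(1,3) le g'_p by fastforce
    then have "{x, y} \<subseteq> T" "a \<notin> {x, y}" using False xy(1,2) unfolding C_def by auto
    moreover have "x \<noteq> y" using xy(3) by auto
    then have "card {x, y} = 2" by simp
    ultimately have "gsharp N g (bse N g T) < gsharp N g {x, y}"
      using gsharp_bse_less[OF T N] a by blast
    moreover have "gsharp N g {x, y} = gsharp N g' C"
      using xy(3,5) \<open>{x, y} \<subseteq> T\<close> g'_T bse_gsharp_edge(2)[of g y x N] by simp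
    ultimately show ?thesis using bse_subset_card(3)[OF T] by simp
  qed
  then show "\<forall>v\<in>C. g' v < gsharp N g' C" using le by fastforce
qed

section \<open>Barycentric coordinates and bisection children\<close>

definition bary_coords :: "'a::real_vector set \<Rightarrow> ('a \<Rightarrow> real) \<Rightarrow> 'a \<Rightarrow> bool" where
  "bary_coords T u x \<longleftrightarrow> (\<forall>v\<in>T. 0 \<le> u v) \<and> sum u T = 1 \<and> (\<Sum>v\<in>T. u v *\<^sub>R v) = x"

lemma convex_hull_iff_bary_coords: "finite T \<Longrightarrow> x \<in> convex hull T \<longleftrightarrow> (\<exists>u. bary_coords T u x)"
  unfolding bary_coords_def by (simp add: convex_hull_finite)

lemma bary_coords_in_convex_hull: "finite W \<Longrightarrow> bary_coords W u x \<Longrightarrow> W \<subseteq> V \<Longrightarrow> x \<in> convex hull V"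
  using convex_hull_iff_bary_coords[of W x] hull_mono[of W V convex] by blast

lemma bary_coords_unique:
  assumes "finite T" "\<not> affine_dependent T" "bary_coords T u x" "bary_coords T u' x" "v \<in> T"
  shows "u v = u' v"
proof (rule ccontr)
  assume "u v \<noteq> u' v"
  moreover have "sum (\<lambda>v. u v - u' v) T = 0" "(\<Sum>v\<in>T. (u v - u' v) *\<^sub>R v) = 0"
    using assms(3,4) unfolding bary_coords_def by (simp_all add: sum_subtractf scaleR_diff_left)
  ultimately have "affine_dependent T"
    using affine_dependent_explicit_finite[OF assms(1)] assms(5) by force
  then show False using assms(2) by blast
qed

lemma bary_coords_extend:
  assumes "finite T" "W \<subseteq> T" "bary_coords W u x"
  shows "bary_coords T (\<lambda>v. if v \<in> W then u v else 0) x"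
proof -
  have W: "T \<inter> W = W" using assms(2) by blast
  have "(\<Sum>v\<in>T. (if v \<in> W then u v else 0) *\<^sub>R v) = (\<Sum>v\<in>T. if v \<in> W then u v *\<^sub>R v else 0)"
    by (rule sum.cong) auto
  then show ?thesis
    using assms(3) sum.inter_restrict[OF assms(1), of u W]
      sum.inter_restrict[OF assms(1), of "\<lambda>v. u v *\<^sub>R v" W]
    unfolding bary_coords_def W by auto
qed

lemma bary_coords_restrict:
  assumes "finite T" "W \<subseteq> T" "bary_coords T u x" "\<forall>v\<in>T - W. u v = 0"
  shows "bary_coords W u x"
  using assms sum.mono_neutral_right[OF assms(1,2), of u]
    sum.mono_neutral_right[OF assms(1,2), of "\<lambda>v. u v *\<^sub>R v"]
  unfolding bary_coords_def by auto

lemma midpoint_in_convex_hull: "r \<in> T \<Longrightarrow> q \<in> T \<Longrightarrow> midpoint r q \<in> convex hull T"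
  using midpoint_in_closed_segment[of r q] hull_mono[of "{r, q}" T]
  by (auto simp: segment_convex_hull)

lemma convex_hull_child_subset:
  "r \<in> T \<Longrightarrow> q \<in> T \<Longrightarrow> convex hull (insert (midpoint r q) (T - {r})) \<subseteq> convex hull T"
  by (rule hull_minimal) (auto intro: midpoint_in_convex_hull hull_inc)

text \<open>In parent coordinates, the weight of the midpoint is split equally between \<open>r\<close> and \<open>q\<close>.\<close>

lemma sums_child_eq_sums_parent:
  fixes W :: "'a::real_vector set" and mu :: "'a \<Rightarrow> real"
  assumes "finite W" "r \<in> W" "q \<in> W" "r \<noteq> q" "midpoint r q \<notin> W"
  defines "p \<equiv> midpoint r q"
  defines "lam \<equiv> \<lambda>v. if v = r then mu p / 2 else if v = q then mu q + mu p / 2 else mu v"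
  shows "sum mu (insert p (W - {r})) = sum lam W"
    "(\<Sum>v\<in>insert p (W - {r}). mu v *\<^sub>R v) = (\<Sum>v\<in>W. lam v *\<^sub>R v)"
proof -
  have rest: "sum f (W - {r}) = f q + sum f (W - {r} - {q})" for f :: "'a \<Rightarrow> 'b::comm_monoid_add"
    using assms(1,3,4) by (intro sum.remove) auto
  have child: "sum f (insert p (W - {r})) = f p + f q + sum f (W - {r} - {q})" for f :: "'a \<Rightarrow> 'b::comm_monoid_add"
    using assms(1,5) rest[of f] unfolding p_def by (simp add: add.assoc)
  have parent: "sum f W = f r + f q + sum f (W - {r} - {q})" for f :: "'a \<Rightarrow> 'b::comm_monoid_add"
    using assms(1,2) rest[of f] by (simp add: sum.remove add.assoc)
  have cong: "sum f (W - {r} - {q}) = sum h (W - {r} - {q})"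
    if "\<And>v. v \<in> W - {r} - {q} \<Longrightarrow> f v = h v" for f h :: "'a \<Rightarrow> 'b::comm_monoid_add"
    using that by (rule sum.cong[OF refl])
  have lam: "lam r = mu p / 2" "lam q = mu q + mu p / 2" "\<And>v. v \<in> W - {r} - {q} \<Longrightarrow> lam v = mu v"
    unfolding lam_def using assms(4) by auto
  show "sum mu (insert p (W - {r})) = sum lam W"
    using cong[of lam mu, OF lam(3)] unfolding child parent lam(1,2) by simp
  have "mu p *\<^sub>R p = (mu p / 2) *\<^sub>R r + (mu p / 2) *\<^sub>R q"
    unfolding p_def midpoint_def by (simp add: scaleR_add_right)
  then show "(\<Sum>v\<in>insert p (W - {r}). mu v *\<^sub>R v) = (\<Sum>v\<in>W. lam v *\<^sub>R v)"
    unfolding child parent lam(1,2) cong[of "\<lambda>v. lam v *\<^sub>R v" "\<lambda>v. mu v *\<^sub>R v"] using lam(3)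
    by (simp add: scaleR_add_left algebra_simps)
qed

lemma bary_coords_child_le:
  fixes T :: "'a::real_vector set"
  assumes "finite T" "\<not> affine_dependent T" "r \<in> T" "q \<in> T" "r \<noteq> q" "midpoint r q \<notin> T"
    and "x \<in> convex hull (insert (midpoint r q) (T - {r}))" "bary_coords T u x"
  shows "u r \<le> u q"
proof -
  let ?p = "midpoint r q"
  obtain mu where mu: "bary_coords (insert ?p (T - {r})) mu x"
    using assms(1,7) convex_hull_iff_bary_coords[of "insert ?p (T - {r})"] by auto
  define lam where "lam v = (if v = r then mu ?p / 2 else if v = q then mu q + mu ?p / 2 else mu v)" for v
  have "bary_coords T lam x" "lam r \<le> lam q"
    using mu sums_child_eq_sums_parent[OF assms(1,3-6), of mu, folded lam_def] assms(3-5)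
    unfolding bary_coords_def lam_def by auto
  then show ?thesis using bary_coords_unique[OF assms(1,2) _ assms(8)] assms(3,4) by metis
qed

lemma child_bary_coords:
  fixes W :: "'a::real_vector set"
  assumes "finite W" "r \<in> W" "q \<in> W" "r \<noteq> q" "midpoint r q \<notin> W"
    and "bary_coords W lam x" "lam r \<le> lam q"
  obtains mu where "bary_coords (insert (midpoint r q) (W - {r})) mu x" "mu q = lam q - lam r"
proof -
  let ?p = "midpoint r q"
  define mu where "mu v = (if v = ?p then 2 * lam r else if v = q then lam q - lam r else lam v)" for v
  have pq: "?p \<noteq> r" "?p \<noteq> q" using assms(2,3,5) by auto
  have "(if v = r then mu ?p / 2 else if v = q then mu q + mu ?p / 2 else mu v) = lam v" if "v \<in> W" for v
    unfolding mu_def using pq that assms(5) by auto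
  then have "sum mu (insert ?p (W - {r})) = sum lam W"
    "(\<Sum>v\<in>insert ?p (W - {r}). mu v *\<^sub>R v) = (\<Sum>v\<in>W. lam v *\<^sub>R v)"
    using sums_child_eq_sums_parent[OF assms(1-5), of mu] by (simp_all cong: sum.cong)
  moreover have "\<forall>v\<in>insert ?p (W - {r}). 0 \<le> mu v"
    using assms(2,6,7) pq unfolding mu_def bary_coords_def by auto
  ultimately have "bary_coords (insert ?p (W - {r})) mu x"
    using assms(6) unfolding bary_coords_def by auto
  moreover have "mu q = lam q - lam r" using pq(2) unfolding mu_def by metis
  ultimately show ?thesis by (rule that)
qed

lemma midpoint_notin_conforming:
  fixes T :: "'a::real_vector set"
  assumes "finite T" "\<not> affine_dependent T" "\<not> affine_dependent T'"
    and "convex hull T \<inter> convex hull T' \<subseteq> convex hull (T \<inter> T')"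
    and "a \<in> T" "b \<in> T" "a \<noteq> b"
  shows "midpoint a b \<notin> T'"
proof
  let ?p = "midpoint a b"
  assume p: "?p \<in> T'"
  then have "?p \<in> convex hull (T \<inter> T')"
    using assms(4-6) midpoint_in_convex_hull[of a T b] hull_inc[of ?p T'] by blast
  then obtain nu where "bary_coords (T \<inter> T') nu ?p"
    using assms(1) convex_hull_iff_bary_coords[of "T \<inter> T'"] by auto
  then have nu: "bary_coords T (\<lambda>v. if v \<in> T \<inter> T' then nu v else 0) ?p"
    by (rule bary_coords_extend[OF assms(1), rotated]) blast
  have "bary_coords {a, b} (\<lambda>v. 1 / 2) ?p"
    using assms(7) unfolding bary_coords_def midpoint_def by (simp add: scaleR_add_right)
  then have half: "bary_coords T (\<lambda>v. if v \<in> {a, b} then 1 / 2 else 0) ?p"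
    using bary_coords_extend[OF assms(1)] assms(5,6) by blast
  have "v \<in> T'" if "v \<in> {a, b}" for v
  proof (rule ccontr)
    assume "v \<notin> T'"
    then show False using bary_coords_unique[OF assms(1,2) half nu, of v] that assms(5,6) by auto
  qed
  then have "a \<in> T'" "b \<in> T'" by auto
  moreover have "?p \<noteq> a" "?p \<noteq> b" using assms(7) by auto
  moreover have "?p \<in> affine hull {a, b}"
    using midpoint_in_convex_hull[of a "{a, b}" b] convex_hull_subset_affine_hull by blast
  ultimately have "?p \<in> affine hull (T' - {?p})" using hull_mono[of "{a, b}" "T' - {?p}"] by blast
  then show False using assms(3) p unfolding affine_dependent_def by blast
qed

lemma affine_independent_child:
  fixes T :: "'a::euclidean_space set"
  assumes "finite T" "\<not> affine_dependent T" "r \<in> T" "q \<in> T" "r \<noteq> q" "midpoint r q \<notin> T"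
  shows "\<not> affine_dependent (insert (midpoint r q) (T - {r}))"
proof -
  let ?p = "midpoint r q"
  let ?C = "insert ?p (T - {r})"
  have "?p \<in> affine hull T"
    using midpoint_in_convex_hull[OF assms(3,4)] convex_hull_subset_affine_hull by blast
  then have sub: "affine hull ?C \<subseteq> affine hull T"
    by (intro hull_minimal) (auto intro: hull_inc)
  have "?p \<in> affine hull ?C" "q \<in> affine hull ?C" using assms(4,5) by (auto intro: hull_inc)
  then have "2 *\<^sub>R ?p + (-1) *\<^sub>R q \<in> affine hull ?C"
    by (intro mem_affine[OF affine_affine_hull]) auto
  moreover have "2 *\<^sub>R ?p + (-1) *\<^sub>R q = r" unfolding midpoint_def by (simp add: scaleR_add_right)
  ultimately have "affine hull T \<subseteq> affine hull ?C"
    by (intro hull_minimal) (auto intro: hull_inc)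
  with sub have "aff_dim ?C = aff_dim T" using aff_dim_affine_hull2 by blast
  moreover have "card ?C = card T"
    using assms(1,3,6) card_gt_0_iff[of T] by (auto simp: card.insert_remove)
  moreover have "aff_dim T = int (card T) - 1" using assms(1,2) affine_independent_iff_card by blast
  ultimately show ?thesis using assms(1) affine_independent_iff_card[of ?C] by simp
qed

lemma conforming_child_other:
  fixes T :: "'a::real_vector set"
  assumes "finite T" "\<not> affine_dependent T" "convex hull T \<inter> convex hull T' \<subseteq> convex hull (T \<inter> T')"
    and "r \<in> T" "q \<in> T" "r \<noteq> q" "midpoint r q \<notin> T" "\<not> {r, q} \<subseteq> T'"
  shows "convex hull (insert (midpoint r q) (T - {r})) \<inter> convex hull T'
    \<subseteq> convex hull (insert (midpoint r q) (T - {r}) \<inter> T')"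
proof
  let ?W = "T \<inter> T'"
  fix x assume x: "x \<in> convex hull (insert (midpoint r q) (T - {r})) \<inter> convex hull T'"
  then have "x \<in> convex hull ?W" using convex_hull_child_subset[OF assms(4,5)] assms(3) by blast
  then obtain nu where "bary_coords ?W nu x" using assms(1) convex_hull_iff_bary_coords[of ?W] by auto
  then have nu: "bary_coords T (\<lambda>v. if v \<in> ?W then nu v else 0) x" (is "bary_coords T ?nu x")
    by (rule bary_coords_extend[OF assms(1), rotated]) blast
  have "?nu r \<le> ?nu q" using x by (intro bary_coords_child_le[OF assms(1,2,4-7) _ nu]) blast
  then have "?nu r = 0" using nu assms(4,8) unfolding bary_coords_def by (auto split: if_splits)
  then have "bary_coords (?W - {r}) ?nu x" by (intro bary_coords_restrict[OF assms(1) _ nu]) auto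
  then show "x \<in> convex hull (insert (midpoint r q) (T - {r}) \<inter> T')"
    by (rule bary_coords_in_convex_hull[rotated]) (use assms(1) in auto)
qed

lemma conforming_child_child:
  fixes T :: "'a::real_vector set"
  assumes "finite T" "\<not> affine_dependent T" "finite T'" "\<not> affine_dependent T'"
    and "convex hull T \<inter> convex hull T' \<subseteq> convex hull (T \<inter> T')"
    and "{r, q} \<subseteq> T" "{r, q} \<subseteq> T'" "r \<noteq> q" "midpoint r q \<notin> T" "midpoint r q \<notin> T'"
    and "r' = r \<or> r' = q"
  defines "C \<equiv> insert (midpoint r q) (T - {r})" and "C' \<equiv> insert (midpoint r q) (T' - {r'})"
  shows "convex hull C \<inter> convex hull C' \<subseteq> convex hull (C \<inter> C')"
proof
  let ?W = "T \<inter> T'"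
  have fin: "finite ?W" using assms(1) by simp
  have mid_qr: "midpoint q r = midpoint r q" by (rule midpoint_sym)
  fix x assume x: "x \<in> convex hull C \<inter> convex hull C'"
  have "convex hull C' \<subseteq> convex hull T'"
    using assms(7,11) convex_hull_child_subset[of r T' q] convex_hull_child_subset[of q T' r]
    unfolding C'_def mid_qr by auto
  then have "x \<in> convex hull ?W"
    using x assms(5,6) convex_hull_child_subset[of r T q] unfolding C_def by blast
  then obtain nu where nu: "bary_coords ?W nu x" using fin convex_hull_iff_bary_coords by blast
  let ?nu = "\<lambda>v. if v \<in> ?W then nu v else 0"
  have "bary_coords T ?nu x" by (rule bary_coords_extend[OF assms(1) _ nu]) blast
  then have "?nu r \<le> ?nu q"
    using x assms(6,8,9) by (intro bary_coords_child_le[OF assms(1,2)]) (auto simp: C_def)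
  then have le: "nu r \<le> nu q" using assms(6,7) by simp
  then obtain mu where mu: "bary_coords (insert (midpoint r q) (?W - {r})) mu x" "mu q = nu q - nu r"
    using child_bary_coords[OF fin _ _ assms(8) _ nu] assms(6,7,9) by blast
  show "x \<in> convex hull (C \<inter> C')"
  proof (cases "r' = r")
    case True
    show ?thesis
      by (rule bary_coords_in_convex_hull[OF _ mu(1)]) (use fin True in \<open>auto simp: C_def C'_def\<close>)
  next
    case False
    then have r': "r' = q" using assms(11) by simp
    have "bary_coords T' ?nu x" by (rule bary_coords_extend[OF assms(3) _ nu]) blast
    then have "?nu q \<le> ?nu r"
      using x assms(7,8,10) r' mid_qr
      by (intro bary_coords_child_le[OF assms(3,4)]) (auto simp: C'_def)
    then have "mu q = 0" using mu(2) le assms(6,7) by simp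
    then have "bary_coords (insert (midpoint r q) (?W - {r} - {q})) mu x"
      by (intro bary_coords_restrict[OF _ _ mu(1)]) (use fin in auto)
    then show ?thesis
      by (rule bary_coords_in_convex_hull[rotated]) (use fin r' in \<open>auto simp: C_def C'_def\<close>)
  qed
qed

section \<open>Invariants of refinement\<close>

definition conforming_simplices :: "'a::real_vector set set \<Rightarrow> bool" where
  "conforming_simplices \<T> \<longleftrightarrow>
     (\<forall>T\<in>\<T>. finite T \<and> 2 \<le> card T \<and> \<not> affine_dependent T) \<and>
     (\<forall>T\<in>\<T>. \<forall>T'\<in>\<T>. convex hull T \<inter> convex hull T' \<subseteq> convex hull (T \<inter> T'))"

lemma conforming_simplices_midpoint_notin:
  assumes "conforming_simplices \<T>" "T \<in> \<T>" "{a, b} \<subseteq> T" "a \<noteq> b" "X \<in> \<T>"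
  shows "midpoint a b \<notin> X"
  using assms midpoint_notin_conforming[of T X a b] unfolding conforming_simplices_def by auto

lemma bisect_all_cases:
  assumes "X \<in> bisect_all \<T> a b"
  obtains (old) "X \<in> \<T>" "\<not> {a, b} \<subseteq> X"
    | (child) T r q where "T \<in> \<T>" "{a, b} \<subseteq> T" "(r, q) = (a, b) \<or> (r, q) = (b, a)"
      "X = insert (midpoint r q) (T - {r})"
proof -
  consider "X \<in> \<T>" "\<not> {a, b} \<subseteq> X"
    | T where "T \<in> \<T>" "{a, b} \<subseteq> T"
      "X = insert (midpoint a b) (T - {a}) \<or> X = insert (midpoint a b) (T - {b})"
    using assms unfolding bisect_all_def patch_def by blast
  then show ?thesis
  proof cases
    case 1
    then show ?thesis by (rule that(1))
  next
    case (2 T)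
    then show ?thesis using that(2)[of T a b] that(2)[of T b a] by (auto simp: midpoint_sym)
  qed
qed

lemma bisect_all_simplex:
  fixes \<T> :: "'a::euclidean_space set set"
  assumes conf: "conforming_simplices \<T>" and "a \<noteq> b" "X \<in> bisect_all \<T> a b"
  shows "finite X \<and> 2 \<le> card X \<and> \<not> affine_dependent X"
  using assms(3)
proof (cases rule: bisect_all_cases)
  case old
  then show ?thesis using conf unfolding conforming_simplices_def by blast
next
  case (child T r q)
  have T: "finite T" "2 \<le> card T" "\<not> affine_dependent T"
    using conf child(1) unfolding conforming_simplices_def by auto
  have "midpoint r q \<notin> T" "r \<in> T" "q \<in> T" "r \<noteq> q"
    using child(2,3) assms(2) conforming_simplices_midpoint_notin[OF conf child(1,2) assms(2) child(1)]
    by (auto simp: midpoint_sym)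
  then show ?thesis
    using T affine_independent_child[of T r q] card_gt_0_iff[of T] child(4)
    by (auto simp: card.insert_remove)
qed

lemma bisect_all_child_conforming:
  fixes \<T> :: "'a::real_vector set set"
  assumes conf: "conforming_simplices \<T>" and "a \<noteq> b"
    and X: "T \<in> \<T>" "{a, b} \<subseteq> T" "(r, q) = (a, b) \<or> (r, q) = (b, a)"
      "X = insert (midpoint r q) (T - {r})"
    and Y: "Y \<in> bisect_all \<T> a b"
  shows "convex hull X \<inter> convex hull Y \<subseteq> convex hull (X \<inter> Y)"
proof -
  have simplex: "finite S" "\<not> affine_dependent S" if "S \<in> \<T>" for S
    using conf that unfolding conforming_simplices_def by auto
  have hulls: "convex hull T \<inter> convex hull S \<subseteq> convex hull (T \<inter> S)" if "S \<in> \<T>" for S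
    using conf X(1) that unfolding conforming_simplices_def by auto
  have fresh: "midpoint r q \<notin> S" if "S \<in> \<T>" for S
    using conforming_simplices_midpoint_notin[OF conf X(1,2) \<open>a \<noteq> b\<close> that] X(3)
    by (auto simp: midpoint_sym)
  have rq: "{r, q} = {a, b}" "r \<noteq> q" using X(3) \<open>a \<noteq> b\<close> by auto
  from Y show ?thesis
  proof (cases rule: bisect_all_cases)
    case old
    then have "\<not> {r, q} \<subseteq> Y" using rq(1) by simp
    moreover have "r \<in> T" "q \<in> T" using X(2) rq(1) by auto
    ultimately show ?thesis unfolding X(4)
      using conforming_child_other[OF simplex[OF X(1)] hulls[OF old(1)] _ _ rq(2) fresh[OF X(1)]]
      by blast
  next
    case (child T' r' q')
    then have "midpoint r' q' = midpoint r q" "r' = r \<or> r' = q" using X(3) by (auto simp: midpoint_sym)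
    then show ?thesis
      using conforming_child_child[of T T' r q r'] simplex[OF X(1)] simplex[OF child(1)]
        hulls[OF child(1)] fresh[OF X(1)] fresh[OF child(1)] X(2,4) child(2,4) rq
      by auto
  qed
qed

lemma conforming_simplices_bisect_all:
  fixes \<T> :: "'a::euclidean_space set set"
  assumes "conforming_simplices \<T>" "a \<noteq> b"
  shows "conforming_simplices (bisect_all \<T> a b)"
  unfolding conforming_simplices_def
proof (rule conjI; intro ballI)
  fix X assume "X \<in> bisect_all \<T> a b"
  then show "finite X \<and> 2 \<le> card X \<and> \<not> affine_dependent X" by (rule bisect_all_simplex[OF assms])
next
  fix X Y assume X: "X \<in> bisect_all \<T> a b" and Y: "Y \<in> bisect_all \<T> a b"
  from X show "convex hull X \<inter> convex hull Y \<subseteq> convex hull (X \<inter> Y)"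
  proof (cases rule: bisect_all_cases)
    case old
    from Y show ?thesis
    proof (cases rule: bisect_all_cases)
      case old': old
      then show ?thesis using assms(1) old unfolding conforming_simplices_def by blast
    next
      case (child T r q)
      then show ?thesis using bisect_all_child_conforming[OF assms child X] by (simp add: Int_commute)
    qed
  next
    case (child T r q)
    then show ?thesis by (rule bisect_all_child_conforming[OF assms _ _ _ _ Y])
  qed
qed

definition generation_invariant :: "nat \<Rightarrow> 'a set set \<Rightarrow> ('a \<Rightarrow> int) \<Rightarrow> bool" where
  "generation_invariant N \<T> g \<longleftrightarrow> (\<forall>T\<in>\<T>. inj_on g T \<and> (\<forall>v\<in>T. g v < gsharp N g T))"

lemma generation_invariant_bisect_all:
  fixes \<T> :: "'a::real_vector set set"
  assumes N: "0 < N" and conf: "conforming_simplices \<T>" and gen: "generation_invariant N \<T> g"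
    and T: "T \<in> \<T>" "bse N g T = {a, b}" "a \<noteq> b"
    and compatible: "\<forall>T'\<in>patch \<T> (bse N g T). bse N g T' = bse N g T"
  shows "generation_invariant N (bisect_all \<T> a b) (g(midpoint a b := gsharp N g T))"
proof -
  let ?g' = "g(midpoint a b := gsharp N g T)"
  have simplex: "finite X" "inj_on g X" "2 \<le> card X" "\<forall>v\<in>X. g v < gsharp N g X" if "X \<in> \<T>" for X
    using conf gen that unfolding conforming_simplices_def generation_invariant_def by auto
  have ab: "{a, b} \<subseteq> T" using bse_subset_card(1)[OF simplex(1-3)[OF T(1)], where N = N] T(2) by simp
  have fresh: "midpoint a b \<notin> X" if "X \<in> \<T>" for X
    by (rule conforming_simplices_midpoint_notin[OF conf T(1) ab T(3) that])
  show ?thesis unfolding generation_invariant_def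
  proof
    fix X assume "X \<in> bisect_all \<T> a b"
    then show "inj_on ?g' X \<and> (\<forall>v\<in>X. ?g' v < gsharp N ?g' X)"
    proof (cases rule: bisect_all_cases)
      case old
      have "?g' v = g v" if "v \<in> X" for v using fresh[OF old(1)] that by auto
      then show ?thesis
        using simplex[OF old(1)] bse_gsharp_cong(2)[OF simplex(1-3)[OF old(1)], of ?g']
        by (simp cong: inj_on_cong)
    next
      case (child T' r q)
      have bse: "bse N g T' = {a, b}" using compatible child(1,2) T(2) unfolding patch_def by auto
      then have r: "r \<in> bse N g T'" using child(3) by auto
      have gsharp: "gsharp N g T' = gsharp N g T"
        using bse_subset_card(3)[OF simplex(1-3)[OF T(1)], where N = N]
          bse_subset_card(3)[OF simplex(1-3)[OF child(1)], where N = N] T(2) bse by simp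
      have X: "X = insert (midpoint a b) (T' - {r})" using child(3,4) by (auto simp: midpoint_sym)
      show ?thesis
        using child_generations[OF N simplex(1-4)[OF child(1)] r fresh[OF child(1)]]
        unfolding X gsharp by blast
    qed
  qed
qed

definition admissible :: "nat \<Rightarrow> 'a::real_vector set set \<times> ('a \<Rightarrow> int) \<Rightarrow> bool" where
  "admissible N s \<longleftrightarrow> conforming_simplices (fst s) \<and> generation_invariant N (fst s) (snd s)"

lemma refines_admissible:
  fixes s :: "'a::euclidean_space set set \<times> ('a \<Rightarrow> int)"
  assumes "refines N s T s'" "0 < N" "admissible N s"
  shows "admissible N s'"
  using assms(1,3)
proof (induction rule: refines.induct)
  case (bisect T \<T> g a b)
  have "conforming_simplices (bisect_all \<T> a b)"
    by (rule conforming_simplices_bisect_all) (use bisect in \<open>simp_all add: admissible_def\<close>)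
  moreover have "generation_invariant N (bisect_all \<T> a b) (g(midpoint a b := gsharp N g T))"
    by (rule generation_invariant_bisect_all[OF assms(2)]) (use bisect in \<open>auto simp: admissible_def\<close>)
  ultimately show ?case unfolding admissible_def by simp
qed simp

lemma colored_triangulation_admissible:
  fixes \<T>0 :: "'a::euclidean_space set set"
  assumes "colored_triangulation N \<T>0 c" "0 < N"
  shows "admissible N (\<T>0, \<lambda>v. - int (c v))"
proof -
  let ?g = "\<lambda>v. - int (c v)"
  have simplex: "finite T" "card T = DIM('a) + 1" "\<not> affine_dependent T" "inj_on ?g T"
    "\<forall>v\<in>T. - int N \<le> ?g v \<and> ?g v \<le> 0" if "T \<in> \<T>0" for T
    using assms(1) that DIM_positive[where 'a='a]
    unfolding colored_triangulation_def conforming_triangulation_def inj_on_def by auto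
  have "conforming_simplices \<T>0"
    using assms(1) simplex(1-3) DIM_positive[where 'a='a]
    unfolding colored_triangulation_def conforming_triangulation_def conforming_simplices_def by auto
  moreover have "\<forall>v\<in>T. ?g v < gsharp N ?g T" if T: "T \<in> \<T>0" for T
  proof -
    have "2 \<le> card T" using simplex(2)[OF T] DIM_positive[where 'a='a] by simp
    then obtain x y where "x \<in> T" "y \<in> T" "?g y < ?g x" "bse N ?g T = {x, y}"
      "gsharp N ?g T = gsharp_edge N (?g x) (?g y)"
      by (rule gsharp_as_edge[OF simplex(1,4)[OF T]])
    then have "0 < gsharp N ?g T" using gsharp_edge_pos[OF assms(2)] simplex(5)[OF T] by simp
    then show ?thesis using simplex(5)[OF T] by fastforce
  qed
  ultimately show ?thesis
    unfolding admissible_def generation_invariant_def using simplex(4) by simp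
qed

lemma reachable_admissible:
  fixes \<T>0 :: "'a::euclidean_space set set"
  assumes "reachable N \<T>0 c s" "colored_triangulation N \<T>0 c" "0 < N"
  shows "admissible N s"
  using assms(1)
  by induction (use colored_triangulation_admissible[OF assms(2,3)] refines_admissible[OF _ assms(3)] in auto)

theorem lemma3p8:
  fixes \<T>0 :: "'a::euclidean_space set set" and c :: "'a \<Rightarrow> nat" and N :: nat
  assumes "DIM('a) \<ge> 2" and "N \<ge> DIM('a)"
    and "colored_triangulation N \<T>0 c"
    and "reachable N \<T>0 c (\<T>, g)" and "T \<in> \<T>"
  shows "(\<forall>e. e \<subseteq> T \<and> card e = 2 \<and> e \<noteq> bse N g T
              \<longrightarrow> gsharp N g e > gsharp N g (bse N g T))
       \<and> (\<forall>S e. S \<subseteq> T \<and> card S \<ge> 2 \<and> e \<subseteq> S \<and> card e = 2 \<and> e \<noteq> bse N g S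
              \<longrightarrow> gsharp N g e > gsharp N g (bse N g S))"
proof -
  have N: "0 < N" using assms(1,2) by linarith
  have "admissible N (\<T>, g)" by (rule reachable_admissible[OF assms(4,3) N])
  then have T: "finite T" "inj_on g T" "2 \<le> card T"
    using assms(5) unfolding admissible_def conforming_simplices_def generation_invariant_def by auto
  have "gsharp N g (bse N g S) < gsharp N g e"
    if "S \<subseteq> T" "2 \<le> card S" "e \<subseteq> S" "card e = 2" "e \<noteq> bse N g S" for S e
    using gsharp_bse_less[OF finite_subset[OF that(1) T(1)] inj_on_subset[OF T(2) that(1)] that(2) N]
      that(3-5) .
  then show ?thesis using T(3) by blast
qed

end
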